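(* Every map in $\mathcal{UM}^0_{ABAB}$ contains at least one chequered quadrangle (type 4) or at least one opposite colored cylinder (type 7) among its non-root 2-cells.
   Context: Colors: red corresponds to the letter $A$, blue to the letter $B$. The allowed non-root 2-cells, each with a colored boundary, are the following seven types. (1) Red quadrangle: a disc bounded by a 4-gon with all edges red. (2) Blue quadrangle: a disc bounded by a 4-gon with all edges blue. (3) Adjacent colored quadrangle: a disc bounded by a 4-gon whose edge colors in cyclic order are red, red, blue, blue. (4) Chequered quadrangle: a disc bounded by a 4-gon whose edge colors in cyclic order are red, blue, red, blue. (5) Red cylinder: a cylinder whose two boundary circles are each a 2-gon with red edges. (6) Blue cylinder: a cylinder whose two boundary circles are each a 2-gon with blue edges. (7) Opposite colored cylinder: a cylinder whose one boundary circle is a 2-gon with red edges and whose other boundary circle is a 2-gon with blue edges. The root face is a disc bounded by a 4-gon with edge colors in cyclic order red, blue, red, blue (the word $ABAB$), with one marked edge. A 2-colored unstable map with root word $ABAB$ consists of the root face together with a finite collection of copies of the allowed 2-cells. All boundary edges are partitioned into pairs, each pair consisting of two edges of the same color, and the two edges of each pair are identified orientation-reversingly, so that the result is a closed oriented surface. Maps are considered up to orientation-preserving homeomorphism preserving colors and the root. $\mathcal{UM}^0_{ABAB}$ is the set of such maps for which the resulting closed surface is connected and homeomorphic to the 2-sphere (genus zero). *)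

theory Defs
  imports Main
begin

text \<open>A map is given by the list ts of types of its non-root 2-cells (cell 0 is the root face,
  cell i (i \<ge> 1) has type ts!(i-1)) together with a gluing involution alpha on the set
  of boundary sides. A side is a triple (cell, boundary circle, position). Each boundary
  circle is traversed in the orientation induced by the cell; consecutive sides are given
  by nxt. Gluing is orientation-reversing.\<close>

datatype color = Red | Blue

datatype cell_type =
    RedQuad | BlueQuad | AdjQuad | CheqQuad | RedCyl | BlueCyl | OppCyl

type_synonym side = "nat \<times> nat \<times> nat"

fun cell_bd :: "cell_type \<Rightarrow> color list list" where
  "cell_bd RedQuad = [[Red, Red, Red, Red]]"
| "cell_bd BlueQuad = [[Blue, Blue, Blue, Blue]]"
| "cell_bd AdjQuad = [[Red, Red, Blue, Blue]]"
| "cell_bd CheqQuad = [[Red, Blue, Red, Blue]]"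
| "cell_bd RedCyl = [[Red, Red], [Red, Red]]"
| "cell_bd BlueCyl = [[Blue, Blue], [Blue, Blue]]"
| "cell_bd OppCyl = [[Red, Red], [Blue, Blue]]"

fun is_disc :: "cell_type \<Rightarrow> bool" where
  "is_disc RedQuad = True"
| "is_disc BlueQuad = True"
| "is_disc AdjQuad = True"
| "is_disc CheqQuad = True"
| "is_disc RedCyl = False"
| "is_disc BlueCyl = False"
| "is_disc OppCyl = False"

definition root_bd :: "color list list" where
  "root_bd = [[Red, Blue, Red, Blue]]"

definition cbd :: "cell_type list \<Rightarrow> nat \<Rightarrow> color list list" where
  "cbd ts i = (if i = 0 then root_bd else cell_bd (ts ! (i - 1)))"

definition sides :: "cell_type list \<Rightarrow> side set" where
  "sides ts = {(i, j, k). i \<le> length ts \<and> j < length (cbd ts i) \<and> k < length (cbd ts i ! j)}"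

definition side_color :: "cell_type list \<Rightarrow> side \<Rightarrow> color" where
  "side_color ts s = (case s of (i, j, k) \<Rightarrow> cbd ts i ! j ! k)"

definition nxt :: "cell_type list \<Rightarrow> side \<Rightarrow> side" where
  "nxt ts s = (case s of (i, j, k) \<Rightarrow> (i, j, (k + 1) mod length (cbd ts i ! j)))"

definition valid_gluing :: "cell_type list \<Rightarrow> (side \<Rightarrow> side) \<Rightarrow> bool" where
  "valid_gluing ts alpha \<longleftrightarrow>
     (\<forall>s \<in> sides ts. alpha s \<in> sides ts \<and> alpha (alpha s) = s \<and> alpha s \<noteq> s
        \<and> side_color ts (alpha s) = side_color ts s)"

text \<open>Vertices of the glued surface: orbits of nxt o alpha on sides (each side represents
  its starting corner).\<close>
definition vert_rel :: "cell_type list \<Rightarrow> (side \<Rightarrow> side) \<Rightarrow> side rel" where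
  "vert_rel ts alpha = {(s, t). s \<in> sides ts \<and> t \<in> sides ts \<and>
      (\<exists>n. t = ((nxt ts \<circ> alpha) ^^ n) s)}"

definition num_vertices :: "cell_type list \<Rightarrow> (side \<Rightarrow> side) \<Rightarrow> nat" where
  "num_vertices ts alpha = card (sides ts // vert_rel ts alpha)"

definition num_edges :: "cell_type list \<Rightarrow> nat" where
  "num_edges ts = card (sides ts) div 2"

text \<open>Number of disc cells (the root face plus the quadrangles); cylinders contribute
  Euler characteristic 0.\<close>
definition num_discs :: "cell_type list \<Rightarrow> nat" where
  "num_discs ts = 1 + length (filter is_disc ts)"

definition euler_char :: "cell_type list \<Rightarrow> (side \<Rightarrow> side) \<Rightarrow> int" where
  "euler_char ts alpha = int (num_vertices ts alpha) - int (num_edges ts) + int (num_discs ts)"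

definition adj_rel :: "cell_type list \<Rightarrow> (side \<Rightarrow> side) \<Rightarrow> side rel" where
  "adj_rel ts alpha = {(s, alpha s) | s. s \<in> sides ts} \<union>
     {(s, t). s \<in> sides ts \<and> t \<in> sides ts \<and> fst s = fst t}"

definition connected_map :: "cell_type list \<Rightarrow> (side \<Rightarrow> side) \<Rightarrow> bool" where
  "connected_map ts alpha \<longleftrightarrow>
     (\<forall>s \<in> sides ts. \<forall>t \<in> sides ts. (s, t) \<in> (adj_rel ts alpha)\<^sup>*)"

definition UM0_ABAB :: "cell_type list \<Rightarrow> (side \<Rightarrow> side) \<Rightarrow> bool" where
  "UM0_ABAB ts alpha \<longleftrightarrow>
     valid_gluing ts alpha \<and> connected_map ts alpha \<and> euler_char ts alpha = 2"

end

theory Submission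
  imports Defs "HOL-Combinatorics.Transposition"
begin

text \<open>A chequered quadrangle is in fact always present. Let the sheet change whenever a red
  edge is crossed: this defines a double cover of the glued surface in which every vertex and
  every boundary circle has two lifts, since around a vertex every edge is crossed twice and
  every boundary circle carries an even number of red sides. The cellular Euler inequality
  V + F \<le> E + 2K, applied to the cover, shows that over the sphere the cover is trivial; each
  cylinder joins at most two components of the base, which the count absorbs. So there is a
  sheet function on the sides that changes exactly across red sides, both along boundary
  circles and across glued edges. The blue sides on one sheet are paired by the gluing, hence
  even in number; but the root face RBRB contributes exactly one of them, while every cell other
  than a chequered quadrangle contributes an even number, its blue sides occurring in adjacent
  pairs.\<close>

section \<open>Components of a relation\<close>

definition comp_rel :: "('a \<times> 'a) set \<Rightarrow> ('a \<times> 'a) set" where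
  "comp_rel E = (E \<union> E\<inverse>)\<^sup>*"

definition num_comps :: "'a set \<Rightarrow> ('a \<times> 'a) set \<Rightarrow> nat" where
  "num_comps D E = card (D // comp_rel E)"

definition graph_on :: "'a set \<Rightarrow> ('a \<Rightarrow> 'a) \<Rightarrow> ('a \<times> 'a) set" where
  "graph_on D f = {(x, f x) | x. x \<in> D}"

lemma comp_rel_refl [simp]: "(x, x) \<in> comp_rel E"
  by (simp add: comp_rel_def)

lemma sym_comp_rel: "sym (comp_rel E)"
  unfolding comp_rel_def by (intro sym_rtrancl sym_Un_converse)

lemma comp_rel_sym: "(x, y) \<in> comp_rel E \<Longrightarrow> (y, x) \<in> comp_rel E"
  using sym_comp_rel by (rule symD)

lemma comp_rel_trans: "(x, y) \<in> comp_rel E \<Longrightarrow> (y, z) \<in> comp_rel E \<Longrightarrow> (x, z) \<in> comp_rel E"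
  unfolding comp_rel_def by (rule rtrancl_trans)

lemma comp_rel_edge: "(x, y) \<in> E \<Longrightarrow> (x, y) \<in> comp_rel E"
  unfolding comp_rel_def by auto

lemma comp_rel_edge_rev: "(x, y) \<in> E \<Longrightarrow> (y, x) \<in> comp_rel E"
  unfolding comp_rel_def by auto

lemma subset_comp_rel: "E \<subseteq> comp_rel E"
  unfolding comp_rel_def by (meson UnI1 r_into_rtrancl subsetI)

lemma comp_rel_mono: "E \<subseteq> comp_rel E' \<Longrightarrow> comp_rel E \<subseteq> comp_rel E'"
proof -
  assume "E \<subseteq> comp_rel E'"
  moreover have "(comp_rel E')\<inverse> = comp_rel E'"
    using sym_comp_rel by (simp add: sym_conv_converse_eq)
  ultimately have "E \<union> E\<inverse> \<subseteq> comp_rel E'"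
    by (metis Un_least converse_mono)
  then have "(E \<union> E\<inverse>)\<^sup>* \<subseteq> ((E' \<union> E'\<inverse>)\<^sup>*)\<^sup>*"
    unfolding comp_rel_def by (rule rtrancl_mono)
  then show ?thesis
    unfolding comp_rel_def by simp
qed

lemma comp_rel_subset: "E \<subseteq> E' \<Longrightarrow> comp_rel E \<subseteq> comp_rel E'"
  by (rule comp_rel_mono) (use subset_comp_rel in fastforce)

lemma comp_rel_Image_eq: "(x, y) \<in> comp_rel E \<Longrightarrow> comp_rel E `` {x} = comp_rel E `` {y}"
  by (auto intro: comp_rel_trans comp_rel_sym)

lemma comp_rel_invariant:
  assumes "\<forall>(x, y)\<in>E. q x = q y" and "(x, y) \<in> comp_rel E"
  shows "q x = q y"
  using assms(2) unfolding comp_rel_def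
  by (induction rule: rtrancl_induct) (use assms(1) in auto)

lemma finite_quotient_any: "finite D \<Longrightarrow> finite (D // R)"
  unfolding quotient_def by simp

lemma comp_rel_Image_coarsen:
  assumes "comp_rel E \<subseteq> comp_rel E'"
  shows "comp_rel E' `` (comp_rel E `` {x}) = comp_rel E' `` {x}"
  using assms by (auto intro: comp_rel_trans)

lemma quotient_comp_rel_coarsen:
  assumes "comp_rel E \<subseteq> comp_rel E'"
  shows "D // comp_rel E' = (\<lambda>X. comp_rel E' `` X) ` (D // comp_rel E)"
  unfolding quotient_def by (simp add: image_UN comp_rel_Image_coarsen[OF assms])

lemma num_comps_mono:
  assumes "finite D" and "comp_rel E \<subseteq> comp_rel E'"
  shows "num_comps D E' \<le> num_comps D E"
  unfolding num_comps_def quotient_comp_rel_coarsen[OF assms(2)]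
  by (rule card_image_le) (rule finite_quotient_any[OF assms(1)])

lemma num_comps_less:
  assumes "finite D" and "comp_rel E \<subseteq> comp_rel E'"
    and "a \<in> D" "b \<in> D" "(a, b) \<in> comp_rel E'" "(a, b) \<notin> comp_rel E"
  shows "num_comps D E' < num_comps D E"
proof -
  let ?f = "\<lambda>X. comp_rel E' `` X"
  let ?Q = "D // comp_rel E"
  have classes: "comp_rel E `` {a} \<in> ?Q" "comp_rel E `` {b} \<in> ?Q"
    using assms(3,4) by (auto intro: quotientI)
  have "comp_rel E `` {a} \<noteq> comp_rel E `` {b}"
    using assms(6) by (metis Image_singleton_iff comp_rel_refl)
  moreover have "?f (comp_rel E `` {a}) = ?f (comp_rel E `` {b})"
    unfolding comp_rel_Image_coarsen[OF assms(2)] by (rule comp_rel_Image_eq[OF assms(5)])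
  ultimately have "\<not> inj_on ?f ?Q"
    using classes inj_onD[of ?f ?Q] by blast
  moreover have "finite ?Q"
    using assms(1) by (rule finite_quotient_any)
  ultimately have "card (?f ` ?Q) \<noteq> card ?Q"
    using eq_card_imp_inj_on by blast
  then show ?thesis
    unfolding num_comps_def quotient_comp_rel_coarsen[OF assms(2)]
    using card_image_le[OF \<open>finite ?Q\<close>, of ?f] by linarith
qed

lemma comp_rel_insert_cases:
  assumes "(x, y) \<in> comp_rel (insert (a, b) E)"
  shows "(x, y) \<in> comp_rel E \<or> (x, a) \<in> comp_rel E \<and> (b, y) \<in> comp_rel E
    \<or> (x, b) \<in> comp_rel E \<and> (a, y) \<in> comp_rel E"
  using assms unfolding comp_rel_def[of "insert (a, b) E"]
proof (induction rule: rtrancl_induct)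
  case base
  then show ?case by simp
next
  case (step v w)
  then have "(v, w) \<in> comp_rel E \<or> v = a \<and> w = b \<or> v = b \<and> w = a"
    using comp_rel_edge[of v w E] comp_rel_edge_rev[of w v E] by blast
  then show ?case
    using step.IH by (metis comp_rel_refl comp_rel_trans)
qed

lemma comp_rel_insert_same:
  assumes "(a, b) \<in> comp_rel E"
  shows "comp_rel (insert (a, b) E) = comp_rel E"
proof
  show "comp_rel (insert (a, b) E) \<subseteq> comp_rel E"
  proof clarify
    fix x y assume "(x, y) \<in> comp_rel (insert (a, b) E)"
    then show "(x, y) \<in> comp_rel E"
      using comp_rel_insert_cases[of x y a b E] assms comp_rel_sym[OF assms]
      by (metis comp_rel_trans)
  qed
  show "comp_rel E \<subseteq> comp_rel (insert (a, b) E)"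
    by (rule comp_rel_subset) auto
qed

lemma comp_rel_insert_Image_eq:
  assumes "(x, a) \<notin> comp_rel (insert (a, b) E)"
  shows "comp_rel (insert (a, b) E) `` {x} = comp_rel E `` {x}"
proof
  have sub: "comp_rel E \<subseteq> comp_rel (insert (a, b) E)"
    by (rule comp_rel_subset) auto
  then show "comp_rel E `` {x} \<subseteq> comp_rel (insert (a, b) E) `` {x}"
    by (rule Image_mono) simp
  show "comp_rel (insert (a, b) E) `` {x} \<subseteq> comp_rel E `` {x}"
  proof
    fix y assume "y \<in> comp_rel (insert (a, b) E) `` {x}"
    then have "(x, y) \<in> comp_rel (insert (a, b) E)"
      by simp
    from comp_rel_insert_cases[OF this]
    have "(x, y) \<in> comp_rel E \<or> (x, a) \<in> comp_rel E \<or> (x, b) \<in> comp_rel E"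
      by blast
    moreover have "(x, a) \<notin> comp_rel E"
      using assms sub by blast
    moreover have "(x, b) \<notin> comp_rel E"
    proof
      assume "(x, b) \<in> comp_rel E"
      then have "(x, b) \<in> comp_rel (insert (a, b) E)"
        using sub by blast
      moreover have "(b, a) \<in> comp_rel (insert (a, b) E)"
        by (rule comp_rel_edge_rev) simp
      ultimately have "(x, a) \<in> comp_rel (insert (a, b) E)"
        by (rule comp_rel_trans)
      with assms show False
        by contradiction
    qed
    ultimately show "y \<in> comp_rel E `` {x}"
      by simp
  qed
qed

lemma quotient_comp_rel_insert_subset:
  "D // comp_rel E \<subseteq> {comp_rel E `` {a}, comp_rel E `` {b}}
     \<union> (D // comp_rel (insert (a, b) E) - {comp_rel (insert (a, b) E) `` {a}})"
proof
  fix X assume "X \<in> D // comp_rel E"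
  then obtain x where x: "X = comp_rel E `` {x}" "x \<in> D"
    by (rule quotientE)
  show "X \<in> {comp_rel E `` {a}, comp_rel E `` {b}}
      \<union> (D // comp_rel (insert (a, b) E) - {comp_rel (insert (a, b) E) `` {a}})"
  proof (cases "(x, a) \<in> comp_rel (insert (a, b) E)")
    case True
    from comp_rel_insert_cases[OF this]
    have "(x, a) \<in> comp_rel E \<or> (x, b) \<in> comp_rel E"
      by auto
    then show ?thesis
      using x(1) comp_rel_Image_eq[of x a E] comp_rel_Image_eq[of x b E] by auto
  next
    case False
    then have "comp_rel (insert (a, b) E) `` {x} \<noteq> comp_rel (insert (a, b) E) `` {a}"
      by (metis Image_singleton_iff comp_rel_refl)
    moreover have "comp_rel (insert (a, b) E) `` {x} \<in> D // comp_rel (insert (a, b) E)"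
      using x(2) by (rule quotientI)
    ultimately show ?thesis
      unfolding x(1) comp_rel_insert_Image_eq[OF False, symmetric] by blast
  qed
qed

lemma num_comps_insert_le:
  assumes "finite D" and "a \<in> D"
  shows "num_comps D E \<le> num_comps D (insert (a, b) E) + 1"
proof -
  let ?Q' = "D // comp_rel (insert (a, b) E)"
  let ?A = "comp_rel (insert (a, b) E) `` {a}"
  have A: "?A \<in> ?Q'"
    using assms(2) by (rule quotientI)
  then have pos: "card ?Q' > 0"
    using finite_quotient_any[OF assms(1)] by (auto simp: card_gt_0_iff)
  have "card (D // comp_rel E) \<le> card ({comp_rel E `` {a}, comp_rel E `` {b}} \<union> (?Q' - {?A}))"
    using quotient_comp_rel_insert_subset
    by (rule card_mono[rotated]) (simp add: assms(1) finite_quotient_any)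
  also have "\<dots> \<le> card {comp_rel E `` {a}, comp_rel E `` {b}} + card (?Q' - {?A})"
    by (rule card_Un_le)
  also have "\<dots> \<le> 2 + (card ?Q' - 1)"
  proof (rule add_mono)
    show "card {comp_rel E `` {a}, comp_rel E `` {b}} \<le> 2"
      by (simp add: card_insert_if)
    show "card (?Q' - {?A}) \<le> card ?Q' - 1"
      using A by (simp add: card_Diff_singleton)
  qed
  also have "\<dots> = card ?Q' + 1"
    using pos by simp
  finally show ?thesis
    unfolding num_comps_def .
qed

lemma num_comps_le_union:
  assumes "finite D" and "finite A" and "\<forall>p\<in>A. fst p \<in> D"
  shows "num_comps D E \<le> num_comps D (E \<union> A) + card A"
  using assms(2,3)
proof (induction A rule: finite_induct)
  case empty
  then show ?case by simp
next
  case (insert p F)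
  obtain a b where p: "p = (a, b)"
    by (cases p)
  have "num_comps D E \<le> num_comps D (E \<union> F) + card F"
    using insert by simp
  also have "num_comps D (E \<union> F) \<le> num_comps D (insert (a, b) (E \<union> F)) + 1"
    using insert.prems p by (intro num_comps_insert_le[OF assms(1)]) simp
  finally show ?case
    using insert.hyps p by simp
qed

lemma card_image_le_num_comps:
  assumes "finite D" and "\<forall>(x, y)\<in>E. q x = q y"
  shows "card (q ` D) \<le> num_comps D E"
proof -
  have "q ` D = (\<lambda>X. q (SOME x. x \<in> X)) ` (D // comp_rel E)"
  proof -
    have "q (SOME y. y \<in> comp_rel E `` {x}) = q x" for x
      using someI[of "\<lambda>y. y \<in> comp_rel E `` {x}" x]
        comp_rel_invariant[OF assms(2), of x] by simp
    then show ?thesis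
      unfolding quotient_def by (auto simp: image_UN)
  qed
  then show ?thesis
    unfolding num_comps_def using assms(1) by (simp add: card_image_le finite_quotient_any)
qed

lemma num_comps_le_one:
  assumes "finite D" and "\<forall>x\<in>D. \<forall>y\<in>D. (x, y) \<in> E\<^sup>*"
  shows "num_comps D E \<le> 1"
proof -
  have "E\<^sup>* \<subseteq> comp_rel E"
    unfolding comp_rel_def by (rule rtrancl_mono) blast
  have "X = Y" if XY: "X \<in> D // comp_rel E" "Y \<in> D // comp_rel E" for X Y
  proof -
    obtain x where x: "X = comp_rel E `` {x}" "x \<in> D"
      using XY(1) by (rule quotientE)
    obtain y where y: "Y = comp_rel E `` {y}" "y \<in> D"
      using XY(2) by (rule quotientE)
    have "(x, y) \<in> comp_rel E"
      using assms(2) x(2) y(2) \<open>E\<^sup>* \<subseteq> comp_rel E\<close> by blast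
    then show "X = Y"
      unfolding x(1) y(1) by (rule comp_rel_Image_eq)
  qed
  then show ?thesis
    unfolding num_comps_def using card_le_Suc0_iff_eq[OF finite_quotient_any[OF assms(1)]] by simp
qed

section \<open>Permutations and the Euler inequality\<close>

lemma graph_on_cong: "(\<And>x. x \<in> D \<Longrightarrow> f x = g x) \<Longrightarrow> graph_on D f = graph_on D g"
  unfolding graph_on_def by force

lemma graph_onI: "x \<in> D \<Longrightarrow> (x, f x) \<in> graph_on D f"
  unfolding graph_on_def by blast

lemma comp_rel_graph_on: "x \<in> D \<Longrightarrow> (x, f x) \<in> comp_rel (graph_on D f)"
  by (rule comp_rel_edge) (rule graph_onI)

lemma funpow_in: "f ` D \<subseteq> D \<Longrightarrow> x \<in> D \<Longrightarrow> (f ^^ n) x \<in> D"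
  by (induction n) auto

lemma funpow_inj_on_cancel:
  assumes "inj_on f D" "f ` D \<subseteq> D" "x \<in> D" "y \<in> D" "(f ^^ n) x = (f ^^ n) y"
  shows "x = y"
  using assms(5)
proof (induction n)
  case 0
  then show ?case by simp
next
  case (Suc n)
  have "(f ^^ n) x \<in> D" "(f ^^ n) y \<in> D"
    using funpow_in assms(2-4) by auto
  moreover have "f ((f ^^ n) x) = f ((f ^^ n) y)"
    using Suc.prems by simp
  ultimately have "(f ^^ n) x = (f ^^ n) y"
    by (metis inj_onD[OF assms(1)])
  then show ?case
    by (rule Suc.IH)
qed

lemma funpow_period:
  assumes "finite D" "f ` D \<subseteq> D" "inj_on f D" "x \<in> D"
  obtains n where "n > 0" "(f ^^ n) x = x"
proof -
  let ?orb = "\<lambda>k. (f ^^ k) x"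
  have "\<not> inj_on ?orb {..card D}"
  proof
    assume "inj_on ?orb {..card D}"
    moreover have "?orb ` {..card D} \<subseteq> D"
      using funpow_in[OF assms(2,4)] by blast
    ultimately have "card {..card D} \<le> card D"
      using card_inj_on_le[OF _ _ assms(1)] by blast
    then show False
      by simp
  qed
  then obtain i j where "i \<noteq> j" "?orb i = ?orb j"
    unfolding inj_on_def by blast
  then obtain i j where "i < j" "?orb i = ?orb j"
    by (metis linorder_neqE_nat)
  then have "(f ^^ i) ((f ^^ (j - i)) x) = (f ^^ i) x"
    by (metis add_diff_inverse_nat funpow_add less_imp_not_less o_apply)
  then have "(f ^^ (j - i)) x = x"
    using funpow_inj_on_cancel[OF assms(3,2) funpow_in[OF assms(2,4)] assms(4)] by blast
  with \<open>i < j\<close> show ?thesis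
    using that[of "j - i"] by simp
qed

lemma comp_rel_funpow:
  assumes "f ` D \<subseteq> D" "x \<in> D" "\<forall>k<m. g ((f ^^ k) x) = f ((f ^^ k) x)"
  shows "(x, (f ^^ m) x) \<in> comp_rel (graph_on D g)"
  using assms(3)
proof (induction m)
  case 0
  then show ?case by simp
next
  case (Suc m)
  have "(x, (f ^^ m) x) \<in> comp_rel (graph_on D g)"
    using Suc by simp
  moreover have "((f ^^ m) x, (f ^^ Suc m) x) \<in> comp_rel (graph_on D g)"
    using comp_rel_graph_on[OF funpow_in[OF assms(1,2)], of m g] Suc.prems by simp
  ultimately show ?case
    by (rule comp_rel_trans)
qed

text \<open>As a is not connected to b, the f-orbit of b avoids a, so f \<circ> transpose a b follows
  that orbit from f b back to b.\<close>
lemma comp_rel_transpose_cycle: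
  assumes "finite D" "f ` D \<subseteq> D" "inj_on f D" "a \<in> D" "b \<in> D"
    and "(a, b) \<notin> comp_rel (graph_on D f)"
  shows "(f b, b) \<in> comp_rel (graph_on D (f \<circ> transpose a b))"
proof -
  define n where "n = (LEAST n. n > 0 \<and> (f ^^ n) b = b)"
  obtain p where "p > 0" "(f ^^ p) b = b"
    using funpow_period[OF assms(1,2,3,5)] .
  then have "\<exists>p. p > 0 \<and> (f ^^ p) b = b"
    by blast
  then have n: "n > 0 \<and> (f ^^ n) b = b"
    unfolding n_def by (rule LeastI_ex)
  have avoid: "(f ^^ k) (f b) \<noteq> a \<and> (f ^^ k) (f b) \<noteq> b" if "k < n - 1" for k
  proof
    have orbit: "(f ^^ k) (f b) = (f ^^ Suc k) b"
      by (simp only: funpow_Suc_right comp_apply)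
    have "(b, (f ^^ Suc k) b) \<in> comp_rel (graph_on D f)"
      using assms(2,5) by (rule comp_rel_funpow) simp
    then show "(f ^^ k) (f b) \<noteq> a"
      using assms(6) comp_rel_sym[of b a] orbit by auto
    have "\<not> (Suc k > 0 \<and> (f ^^ Suc k) b = b)"
      using not_less_Least[of "Suc k" "\<lambda>n. n > 0 \<and> (f ^^ n) b = b"] that
      unfolding n_def[symmetric] by linarith
    then show "(f ^^ k) (f b) \<noteq> b"
      using orbit by simp
  qed
  have "f b \<in> D"
    using assms(2,5) by blast
  then have "(f b, (f ^^ (n - 1)) (f b)) \<in> comp_rel (graph_on D (f \<circ> transpose a b))"
    by (rule comp_rel_funpow[OF assms(2)]) (use avoid in simp)
  moreover have "(f ^^ (n - 1)) (f b) = (f ^^ Suc (n - 1)) b"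
    by (simp only: funpow_Suc_right comp_apply)
  ultimately show ?thesis
    using n by simp
qed

lemma graph_on_subset_comp_rel_transpose:
  assumes "graph_on D (f \<circ> transpose a b) \<subseteq> E"
    and "(a, f a) \<in> comp_rel E" "(b, f b) \<in> comp_rel E"
  shows "graph_on D f \<subseteq> comp_rel E"
proof (rule subsetI, unfold graph_on_def, clarify)
  fix x assume "x \<in> D"
  show "(x, f x) \<in> comp_rel E"
  proof (cases "x = a \<or> x = b")
    case True
    then show ?thesis
      using assms(2,3) by auto
  next
    case False
    then have "(x, f x) \<in> graph_on D (f \<circ> transpose a b)"
      using graph_onI[OF \<open>x \<in> D\<close>, of "f \<circ> transpose a b"] by simp
    then show ?thesis
      using assms(1) subset_comp_rel by (meson subsetD)
  qed
qed

lemma num_comps_transpose_less: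
  assumes "finite D" "f ` D \<subseteq> D" "inj_on f D" "a \<in> D" "b \<in> D" "a \<noteq> b"
    and "(a, b) \<notin> comp_rel (graph_on D f)"
  shows "num_comps D (graph_on D (f \<circ> transpose a b)) < num_comps D (graph_on D f)"
proof -
  let ?E = "graph_on D (f \<circ> transpose a b)"
  have a: "(a, f b) \<in> comp_rel ?E" and b: "(b, f a) \<in> comp_rel ?E"
    using comp_rel_graph_on[OF assms(4), of "f \<circ> transpose a b"]
      comp_rel_graph_on[OF assms(5), of "f \<circ> transpose a b"] by simp_all
  have cycle_b: "(f b, b) \<in> comp_rel ?E"
    by (rule comp_rel_transpose_cycle[OF assms(1-5,7)])
  have "(b, a) \<notin> comp_rel (graph_on D f)"
    using assms(7) comp_rel_sym by metis
  then have cycle_a: "(f a, a) \<in> comp_rel ?E"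
    using comp_rel_transpose_cycle[OF assms(1-3,5,4)] by (simp add: transpose_commute)
  have "graph_on D f \<subseteq> comp_rel ?E"
    by (rule graph_on_subset_comp_rel_transpose[OF subset_refl])
      (rule comp_rel_trans[OF comp_rel_trans[OF a cycle_b] b],
       rule comp_rel_trans[OF comp_rel_trans[OF b cycle_a] a])
  then have "comp_rel (graph_on D f) \<subseteq> comp_rel ?E"
    by (rule comp_rel_mono)
  moreover have "(a, b) \<in> comp_rel ?E"
    using a cycle_b by (rule comp_rel_trans)
  ultimately show ?thesis
    by (rule num_comps_less[OF assms(1) _ assms(4,5) _ assms(7)])
qed

lemma num_comps_transpose_le:
  assumes "finite D" "a \<in> D" "b \<in> D"
  shows "num_comps D (graph_on D (f \<circ> transpose a b)) \<le> num_comps D (graph_on D f) + 1"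
proof -
  let ?E = "insert (a, f a) (graph_on D (f \<circ> transpose a b))"
  have edges: "(b, f a) \<in> ?E" "(a, f b) \<in> ?E"
    using assms(2,3) by (auto simp: graph_on_def)
  have "(f a, a) \<in> comp_rel ?E"
    by (rule comp_rel_edge_rev) simp
  then have b: "(b, f b) \<in> comp_rel ?E"
    using comp_rel_edge[OF edges(1)] comp_rel_edge[OF edges(2)] comp_rel_trans by metis
  have "graph_on D f \<subseteq> comp_rel ?E"
    by (rule graph_on_subset_comp_rel_transpose[OF subset_insertI _ b]) (simp add: comp_rel_edge)
  then have "num_comps D ?E \<le> num_comps D (graph_on D f)"
    by (intro num_comps_mono[OF assms(1)] comp_rel_mono)
  moreover have "num_comps D (graph_on D (f \<circ> transpose a b)) \<le> num_comps D ?E + 1"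
    by (rule num_comps_insert_le[OF assms(1,2)])
  ultimately show ?thesis
    by simp
qed

definition restrict_id :: "('a \<Rightarrow> 'a) \<Rightarrow> 'a set \<Rightarrow> 'a \<Rightarrow> 'a" where
  "restrict_id g S x = (if x \<in> S then g x else x)"

lemma restrict_id_empty [simp]: "restrict_id g {} = id"
  by (simp add: restrict_id_def fun_eq_iff)

lemma restrict_id_remove_pair:
  assumes "a \<in> S" "b \<in> S" "g a = b" "g b = a"
  shows "restrict_id g S = restrict_id g (S - {a, b}) \<circ> transpose a b"
  using assms by (auto simp: fun_eq_iff restrict_id_def transpose_def)

lemma inj_restrict_id:
  assumes "\<forall>x\<in>S. g x \<in> S \<and> g (g x) = x"
  shows "inj (restrict_id g S)"
  using assms unfolding inj_def restrict_id_def by metis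

lemma comp_rel_graph_on_comp:
  assumes "g ` D \<subseteq> D"
  shows "comp_rel (graph_on D (f \<circ> g)) \<subseteq> comp_rel (graph_on D f \<union> graph_on D g)"
proof (rule comp_rel_mono, rule subsetI)
  fix p assume "p \<in> graph_on D (f \<circ> g)"
  then obtain x where x: "x \<in> D" "p = (x, f (g x))"
    unfolding graph_on_def by auto
  have "(x, g x) \<in> comp_rel (graph_on D f \<union> graph_on D g)"
    using x(1) by (intro comp_rel_edge) (simp add: graph_onI)
  moreover have "(g x, f (g x)) \<in> comp_rel (graph_on D f \<union> graph_on D g)"
    using assms x(1) by (intro comp_rel_edge) (auto simp: graph_onI)
  ultimately show "p \<in> comp_rel (graph_on D f \<union> graph_on D g)"
    unfolding x(2) by (rule comp_rel_trans)
qed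

lemma comp_rel_graph_on_restrict_id:
  "comp_rel (E \<union> graph_on D (restrict_id g S)) \<subseteq> comp_rel (E \<union> graph_on (D \<inter> S) g)"
proof (rule comp_rel_mono, rule subsetI)
  fix p assume "p \<in> E \<union> graph_on D (restrict_id g S)"
  then have "p \<in> E \<union> graph_on (D \<inter> S) g \<or> fst p = snd p"
    by (auto simp: graph_on_def restrict_id_def split: if_splits)
  then show "p \<in> comp_rel (E \<union> graph_on (D \<inter> S) g)"
    using subset_comp_rel by (metis comp_rel_refl prod.collapse subsetD)
qed

lemma comp_rel_insert_pair_graph_on:
  assumes "a \<in> S" "b \<in> S" "g a = b" "g b = a"
  shows "comp_rel (E \<union> graph_on S g) = comp_rel (insert (a, b) (E \<union> graph_on (S - {a, b}) g))"
proof -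
  have "E \<union> graph_on S g = insert (b, a) (insert (a, b) (E \<union> graph_on (S - {a, b}) g))"
    using assms unfolding graph_on_def by auto
  moreover have "(b, a) \<in> comp_rel (insert (a, b) (E \<union> graph_on (S - {a, b}) g))"
    by (rule comp_rel_edge_rev) simp
  ultimately show ?thesis
    by (simp add: comp_rel_insert_same)
qed

lemma restrict_id_permutes:
  assumes "\<phi> ` D \<subseteq> D" "inj_on \<phi> D" "S \<subseteq> D" "\<forall>x\<in>S. g x \<in> S \<and> g (g x) = x"
  shows "(\<phi> \<circ> restrict_id g S) ` D \<subseteq> D" "inj_on (\<phi> \<circ> restrict_id g S) D"
proof -
  have "restrict_id g S ` D \<subseteq> D"
    using assms(3,4) by (auto simp: restrict_id_def)
  then show "(\<phi> \<circ> restrict_id g S) ` D \<subseteq> D" "inj_on (\<phi> \<circ> restrict_id g S) D"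
    using assms(1,2) inj_restrict_id[OF assms(4)]
    by (auto simp: image_comp[symmetric] intro: comp_inj_on inj_on_subset)
qed

lemma comp_rel_graph_on_comp_restrict_id:
  assumes "S \<subseteq> D" "\<forall>x\<in>S. g x \<in> S"
  shows "comp_rel (graph_on D (\<phi> \<circ> restrict_id g S)) \<subseteq> comp_rel (graph_on D \<phi> \<union> graph_on S g)"
proof -
  have "restrict_id g S ` D \<subseteq> D"
    using assms by (auto simp: restrict_id_def)
  then have "comp_rel (graph_on D (\<phi> \<circ> restrict_id g S))
      \<subseteq> comp_rel (graph_on D \<phi> \<union> graph_on D (restrict_id g S))"
    by (rule comp_rel_graph_on_comp)
  also have "\<dots> \<subseteq> comp_rel (graph_on D \<phi> \<union> graph_on (D \<inter> S) g)"
    by (rule comp_rel_graph_on_restrict_id)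
  finally show ?thesis
    using assms(1) by (simp add: Int_absorb1)
qed

lemma involution_remove_pair:
  assumes "finite S" "a \<in> S" "\<forall>x\<in>S. g x \<in> S \<and> g (g x) = x \<and> g x \<noteq> x"
  shows "g a \<in> S" "g a \<noteq> a" "g (g a) = a" "card S = card (S - {a, g a}) + 2"
    "\<forall>x\<in>S - {a, g a}. g x \<in> S - {a, g a} \<and> g (g x) = x \<and> g x \<noteq> x"
proof -
  show a: "g a \<in> S" "g a \<noteq> a" "g (g a) = a"
    using bspec[OF assms(3,2)] by auto
  have pair: "{a, g a} \<subseteq> S" "card {a, g a} = 2"
    using assms(2) a(1,2) by auto
  then show "card S = card (S - {a, g a}) + 2"
    using card_Diff_subset[OF finite.insertI[OF finite.insertI[OF finite.emptyI]] pair(1)]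
      card_mono[OF assms(1) pair(1)] by simp
  have "g x \<in> S - {a, g a} \<and> g (g x) = x \<and> g x \<noteq> x" if x: "x \<in> S - {a, g a}" for x
  proof -
    have gx: "g x \<in> S" "g (g x) = x" "g x \<noteq> x"
      using x bspec[OF assms(3), of x] by auto
    then have "g x \<noteq> a" "g x \<noteq> g a"
      using x a(3) by auto
    then show ?thesis
      using gx by simp
  qed
  then show "\<forall>x\<in>S - {a, g a}. g x \<in> S - {a, g a} \<and> g (g x) = x \<and> g x \<noteq> x"
    by blast
qed

lemma even_card_involution:
  assumes "finite A" "\<forall>x\<in>A. f x \<in> A \<and> f (f x) = x \<and> f x \<noteq> x"
  shows "even (card A)"
  using assms
proof (induction "card A" arbitrary: A rule: less_induct)
  case less
  show ?case
  proof (cases "A = {}")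
    case False
    then obtain x where "x \<in> A"
      by auto
    note pair = involution_remove_pair[OF less.prems(1) this less.prems(2)]
    have "even (card (A - {x, f x}))"
      using less.hyps[of "A - {x, f x}"] pair(4,5) less.prems(1) by simp
    then show ?thesis
      using pair(4) by simp
  qed simp
qed

text \<open>If a and b are already connected by E, the transposition splits at most one cycle of \<pi>;
  otherwise it merges the cycles through a and b, while the edge ab merges at most two
  components of E.\<close>
lemma num_comps_transpose_insert:
  assumes "finite D" "\<pi> ` D \<subseteq> D" "inj_on \<pi> D" "a \<in> D" "b \<in> D" "a \<noteq> b"
    and "comp_rel (graph_on D \<pi>) \<subseteq> comp_rel E"
  shows "num_comps D (graph_on D (\<pi> \<circ> transpose a b)) + 2 * num_comps D E
    \<le> num_comps D (graph_on D \<pi>) + 2 * num_comps D (insert (a, b) E) + 1"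
proof (cases "(a, b) \<in> comp_rel E")
  case True
  then have "num_comps D (insert (a, b) E) = num_comps D E"
    unfolding num_comps_def by (simp add: comp_rel_insert_same)
  moreover have "num_comps D (graph_on D (\<pi> \<circ> transpose a b)) \<le> num_comps D (graph_on D \<pi>) + 1"
    by (rule num_comps_transpose_le[OF assms(1,4,5)])
  ultimately show ?thesis
    by linarith
next
  case False
  with assms(7) have "(a, b) \<notin> comp_rel (graph_on D \<pi>)"
    by (meson subsetD)
  then have "num_comps D (graph_on D (\<pi> \<circ> transpose a b)) < num_comps D (graph_on D \<pi>)"
    by (rule num_comps_transpose_less[OF assms(1-6)])
  moreover have "num_comps D E \<le> num_comps D (insert (a, b) E) + 1"
    by (rule num_comps_insert_le[OF assms(1,4)])
  ultimately show ?thesis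
    by linarith
qed

text \<open>The Euler-characteristic bound V + F \<le> E + 2K for the combinatorial surface whose
  vertices are the cycles of \<phi> \<circ> \<alpha>, faces the cycles of \<phi>, edges the orbits of \<alpha> and K its
  number of components; the edge pairs of \<alpha> are introduced one at a time.\<close>
lemma euler_ineq_restrict_id:
  assumes fin: "finite D" and phi: "\<phi> ` D \<subseteq> D" "inj_on \<phi> D"
    and "S \<subseteq> D" "\<forall>x\<in>S. al x \<in> S \<and> al (al x) = x \<and> al x \<noteq> x"
  shows "2 * (num_comps D (graph_on D (\<phi> \<circ> restrict_id al S)) + num_comps D (graph_on D \<phi>))
    \<le> card S + 4 * num_comps D (graph_on D \<phi> \<union> graph_on S al)"
  using assms(4,5)
proof (induction "card S" arbitrary: S rule: less_induct)
  case less
  show ?case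
  proof (cases "S = {}")
    case True
    then show ?thesis
      by (simp add: graph_on_def)
  next
    case False
    then obtain a where a: "a \<in> S"
      by auto
    define b where "b = al a"
    define S0 where "S0 = S - {a, b}"
    define \<pi> where "\<pi> = \<phi> \<circ> restrict_id al S0"
    note pair = involution_remove_pair[OF finite_subset[OF less.prems(1) fin] a less.prems(2),
        folded b_def, folded S0_def]
    have ab: "a \<in> D" "b \<in> D" "a \<noteq> b"
      using a pair(1,2) less.prems(1) by auto
    have S0: "S0 \<subseteq> D" "\<forall>x\<in>S0. al x \<in> S0 \<and> al (al x) = x"
      using less.prems(1) pair(5) unfolding S0_def by blast+
    have IH: "2 * (num_comps D (graph_on D \<pi>) + num_comps D (graph_on D \<phi>))
        \<le> card S0 + 4 * num_comps D (graph_on D \<phi> \<union> graph_on S0 al)"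
      unfolding \<pi>_def using less.hyps[of S0] pair(4,5) S0(1) by simp
    have perm: "\<phi> \<circ> restrict_id al S = \<pi> \<circ> transpose a b"
      unfolding \<pi>_def S0_def restrict_id_remove_pair[OF a pair(1) b_def[symmetric] pair(3)]
      by (simp add: comp_assoc)
    have K: "comp_rel (graph_on D \<phi> \<union> graph_on S al)
        = comp_rel (insert (a, b) (graph_on D \<phi> \<union> graph_on S0 al))"
      unfolding S0_def by (rule comp_rel_insert_pair_graph_on[OF a pair(1) b_def[symmetric] pair(3)])
    have "comp_rel (graph_on D \<pi>) \<subseteq> comp_rel (graph_on D \<phi> \<union> graph_on S0 al)"
      unfolding \<pi>_def using S0 by (intro comp_rel_graph_on_comp_restrict_id) simp_all
    then have "num_comps D (graph_on D (\<pi> \<circ> transpose a b)) + 2 * num_comps D (graph_on D \<phi> \<union> graph_on S0 al)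
        \<le> num_comps D (graph_on D \<pi>) + 2 * num_comps D (graph_on D \<phi> \<union> graph_on S al) + 1"
      using restrict_id_permutes[OF phi S0] unfolding \<pi>_def[symmetric] num_comps_def K
      by (intro num_comps_transpose_insert[OF fin _ _ ab, unfolded num_comps_def])
    then show ?thesis
      using IH pair(4) unfolding perm distrib_left by linarith
  qed
qed

lemma euler_ineq:
  assumes "finite D" "\<phi> ` D \<subseteq> D" "inj_on \<phi> D"
    and "\<forall>x\<in>D. al x \<in> D \<and> al (al x) = x \<and> al x \<noteq> x"
  shows "2 * (num_comps D (graph_on D (\<phi> \<circ> al)) + num_comps D (graph_on D \<phi>))
    \<le> card D + 4 * num_comps D (graph_on D \<phi> \<union> graph_on D al)"
proof -
  have "graph_on D (\<phi> \<circ> restrict_id al D) = graph_on D (\<phi> \<circ> al)"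
    by (rule graph_on_cong) (simp add: restrict_id_def)
  then show ?thesis
    using euler_ineq_restrict_id[OF assms(1-3) order_refl assms(4)] by simp
qed

section \<open>Double covers\<close>

definition path_lifting :: "('a \<times> 'a) set \<Rightarrow> (('a \<times> bool) \<times> ('a \<times> bool)) set \<Rightarrow> bool" where
  "path_lifting E E' \<longleftrightarrow> (\<forall>x y e. (x, y) \<in> E \<longrightarrow>
     (\<exists>e'. ((x, e), (y, e')) \<in> comp_rel E') \<and> (\<exists>e'. ((y, e), (x, e')) \<in> comp_rel E'))"

lemma comp_rel_lift:
  assumes "path_lifting E E'" and "(x, y) \<in> comp_rel E"
  shows "\<exists>e'. ((x, e), (y, e')) \<in> comp_rel E'"
  using assms(2) unfolding comp_rel_def[of E]
proof (induction rule: rtrancl_induct)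
  case base
  then show ?case by (intro exI[of _ e]) simp
next
  case (step v w)
  then obtain e1 where e1: "((x, e), (v, e1)) \<in> comp_rel E'"
    by blast
  from step.hyps(2) have "(v, w) \<in> E \<or> (w, v) \<in> E"
    by auto
  then obtain e2 where "((v, e1), (w, e2)) \<in> comp_rel E'"
    using assms(1) unfolding path_lifting_def by blast
  then show ?case
    using comp_rel_trans[OF e1] by blast
qed

lemma comp_rel_some_rep: "(y, SOME z. z \<in> comp_rel E `` {y}) \<in> comp_rel E"
  using someI[of "\<lambda>z. z \<in> comp_rel E `` {y}" y] by simp

lemma card_UN_le_double_minus_one:
  assumes "finite Q" "X0 \<in> Q" "card (F X0) \<le> 1" "\<And>X. X \<in> Q \<Longrightarrow> card (F X) \<le> 2"
  shows "card (\<Union>X\<in>Q. F X) + 1 \<le> 2 * card Q"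
proof -
  have "card (\<Union>X\<in>Q. F X) \<le> (\<Sum>X\<in>Q. card (F X))"
    by (rule card_UN_le[OF assms(1)])
  also have "\<dots> = card (F X0) + (\<Sum>X\<in>Q - {X0}. card (F X))"
    by (rule sum.remove[OF assms(1,2)])
  also have "\<dots> \<le> 1 + (\<Sum>X\<in>Q - {X0}. 2)"
    using assms(3,4) by (intro add_mono sum_mono) auto
  also have "\<dots> = 1 + 2 * (card Q - 1)"
    using assms(1,2) by (simp add: card_Diff_singleton)
  finally show ?thesis
    using assms(1,2) card_gt_0_iff[of Q] by auto
qed

lemma num_comps_double_cover_connected_fibre:
  assumes fin: "finite D" and lift: "path_lifting E E'"
    and x0: "x0 \<in> D" "((x0, False), (x0, True)) \<in> comp_rel E'"
  shows "num_comps (D \<times> UNIV) E' + 1 \<le> 2 * num_comps D E"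
proof -
  define Q where "Q = D // comp_rel E"
  define r where "r X = (SOME z. z \<in> X)" for X :: "'a set"
  define fibre where "fibre X = {comp_rel E' `` {(r X, False)}, comp_rel E' `` {(r X, True)}}" for X
  have rep: "(y, r (comp_rel E `` {y})) \<in> comp_rel E" for y
    unfolding r_def by (rule comp_rel_some_rep)
  have "(D \<times> UNIV) // comp_rel E' \<subseteq> (\<Union>X\<in>Q. fibre X)"
  proof
    fix Z assume "Z \<in> (D \<times> UNIV) // comp_rel E'"
    then obtain y e where y: "y \<in> D" "Z = comp_rel E' `` {(y, e)}"
      unfolding quotient_def by auto
    obtain e' where e': "((y, e), (r (comp_rel E `` {y}), e')) \<in> comp_rel E'"
      using comp_rel_lift[OF lift rep] by blast
    have "Z \<in> fibre (comp_rel E `` {y})"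
      unfolding fibre_def y(2) comp_rel_Image_eq[OF e'] by (cases e') auto
    moreover have "comp_rel E `` {y} \<in> Q"
      unfolding Q_def using y(1) by (rule quotientI)
    ultimately show "Z \<in> (\<Union>X\<in>Q. fibre X)"
      by blast
  qed
  then have "card ((D \<times> UNIV) // comp_rel E') \<le> card (\<Union>X\<in>Q. fibre X)"
    by (rule card_mono[rotated]) (simp add: Q_def fin finite_quotient_any fibre_def)
  moreover have "card (\<Union>X\<in>Q. fibre X) + 1 \<le> 2 * card Q"
  proof (rule card_UN_le_double_minus_one)
    show "finite Q"
      unfolding Q_def by (rule finite_quotient_any[OF fin])
    show "comp_rel E `` {x0} \<in> Q"
      unfolding Q_def using x0(1) by (rule quotientI)
    let ?r = "r (comp_rel E `` {x0})"
    obtain e1 e2 where "((?r, False), (x0, e1)) \<in> comp_rel E'" "((?r, True), (x0, e2)) \<in> comp_rel E'"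
      using comp_rel_lift[OF lift comp_rel_sym[OF rep]] by blast
    moreover have "((x0, e), (x0, False)) \<in> comp_rel E'" for e
      by (cases e) (simp_all add: comp_rel_sym[OF x0(2)])
    ultimately have "((?r, False), (?r, True)) \<in> comp_rel E'"
      by (meson comp_rel_sym comp_rel_trans)
    then show "card (fibre (comp_rel E `` {x0})) \<le> 1"
      unfolding fibre_def using comp_rel_Image_eq by fastforce
    show "card (fibre X) \<le> 2" for X
      unfolding fibre_def by (simp add: card_insert_if)
  qed
  ultimately show ?thesis
    unfolding num_comps_def Q_def by linarith
qed

text \<open>The sheet of a point (s, e) of the cover is e \<noteq> g s.\<close>
lemma double_cover_trivial:
  assumes lift: "path_lifting E E'"
    and fibres: "\<And>y. y \<in> D \<Longrightarrow> ((y, False), (y, True)) \<notin> comp_rel E'"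
  obtains g where "\<And>s t e e'. s \<in> D \<Longrightarrow> t \<in> D \<Longrightarrow> (s, t) \<in> comp_rel E \<Longrightarrow>
      ((s, e), (t, e')) \<in> comp_rel E' \<Longrightarrow> (e \<noteq> g s) = (e' \<noteq> g t)"
proof -
  define r where "r y = (SOME z. z \<in> comp_rel E `` {y})" for y
  define g where "g y = (((y, False), (r y, False)) \<in> comp_rel E')" for y
  have sheet: "((y, e), (r y, False)) \<in> comp_rel E' \<longleftrightarrow> e \<noteq> g y" if "y \<in> D" for y e
  proof -
    obtain e0 where "((r y, False), (y, e0)) \<in> comp_rel E'"
      using comp_rel_lift[OF lift comp_rel_sym[OF comp_rel_some_rep]] unfolding r_def by blast
    then have e0: "((y, e0), (r y, False)) \<in> comp_rel E'"
      by (rule comp_rel_sym)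
    have "\<not> (((y, False), (r y, False)) \<in> comp_rel E' \<and> ((y, True), (r y, False)) \<in> comp_rel E')"
      using fibres[OF that] by (meson comp_rel_sym comp_rel_trans)
    with e0 show ?thesis
      unfolding g_def by (cases e0; cases e) auto
  qed
  have "(e \<noteq> g s) = (e' \<noteq> g t)"
    if "s \<in> D" "t \<in> D" "(s, t) \<in> comp_rel E" "((s, e), (t, e')) \<in> comp_rel E'" for s t e e'
  proof -
    have "r s = r t"
      unfolding r_def using comp_rel_Image_eq[OF that(3)] by simp
    moreover have "((s, e), (r s, False)) \<in> comp_rel E' \<longleftrightarrow> ((t, e'), (r s, False)) \<in> comp_rel E'"
      using that(4) by (meson comp_rel_sym comp_rel_trans)
    ultimately show ?thesis
      using sheet[OF that(1)] sheet[OF that(2)] by simp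
  qed
  then show ?thesis
    using that by blast
qed

definition twist :: "('a \<Rightarrow> 'a) \<Rightarrow> ('a \<Rightarrow> bool) \<Rightarrow> 'a \<times> bool \<Rightarrow> 'a \<times> bool" where
  "twist f c p = (f (fst p), snd p \<noteq> c (fst p))"

lemma twist_apply [simp]: "twist f c (x, e) = (f x, e \<noteq> c x)"
  by (simp add: twist_def)

lemma twist_maps_to:
  assumes "f ` D \<subseteq> D"
  shows "twist f c ` (D \<times> UNIV) \<subseteq> D \<times> UNIV"
  using assms by (auto simp: twist_def)

lemma inj_on_twist:
  assumes "inj_on f D"
  shows "inj_on (twist f c) (D \<times> UNIV)"
  using assms by (auto simp: twist_def inj_on_def)

lemma twist_involution:
  assumes "\<forall>x\<in>D. g x \<in> D \<and> g (g x) = x \<and> g x \<noteq> x \<and> c (g x) = c x"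
  shows "\<forall>p\<in>D \<times> UNIV. twist g c p \<in> D \<times> UNIV \<and> twist g c (twist g c p) = p \<and> twist g c p \<noteq> p"
  using assms by (auto simp: twist_def prod_eq_iff)

lemma path_lifting_graph_on_twist:
  "path_lifting (graph_on D f) (graph_on (D \<times> UNIV) (twist f c))"
  unfolding path_lifting_def
proof (intro allI impI)
  fix x y e assume "(x, y) \<in> graph_on D f"
  then have x: "x \<in> D" "y = f x"
    unfolding graph_on_def by auto
  let ?E' = "graph_on (D \<times> UNIV) (twist f c)"
  have fwd: "((x, e), (y, e \<noteq> c x)) \<in> comp_rel ?E'"
    using comp_rel_graph_on[of "(x, e)" "D \<times> UNIV" "twist f c"] x by simp
  have "twist f c (x, e \<noteq> c x) = (y, e)"
    using x(2) by auto
  then have "((x, e \<noteq> c x), (y, e)) \<in> comp_rel ?E'"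
    using comp_rel_graph_on[of "(x, e \<noteq> c x)" "D \<times> UNIV" "twist f c"] x(1) by simp
  then have bwd: "((y, e), (x, e \<noteq> c x)) \<in> comp_rel ?E'"
    by (rule comp_rel_sym)
  from fwd bwd show "(\<exists>e'. ((x, e), (y, e')) \<in> comp_rel ?E') \<and> (\<exists>e'. ((y, e), (x, e')) \<in> comp_rel ?E')"
    by blast
qed

lemma path_lifting_Un:
  assumes "path_lifting E1 E1'" "path_lifting E2 E2'"
  shows "path_lifting (E1 \<union> E2) (E1' \<union> E2')"
proof -
  have "comp_rel E1' \<subseteq> comp_rel (E1' \<union> E2')" "comp_rel E2' \<subseteq> comp_rel (E1' \<union> E2')"
    by (simp_all add: comp_rel_subset)
  then show ?thesis
    using assms unfolding path_lifting_def by blast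
qed

section \<open>Boundary circles and sides of a map\<close>

lemma sides_iff:
  "(i, j, k) \<in> sides ts \<longleftrightarrow> i \<le> length ts \<and> j < length (cbd ts i) \<and> k < length (cbd ts i ! j)"
  by (simp add: sides_def)

lemma cbd_root: "cbd ts 0 = [[Red, Blue, Red, Blue]]"
  by (simp add: cbd_def root_bd_def)

lemma cbd_cell: "i \<noteq> 0 \<Longrightarrow> cbd ts i = cell_bd (ts ! (i - 1))"
  by (simp add: cbd_def)

lemma length_cbd: "0 < length (cbd ts i)" "length (cbd ts i) \<le> 2"
  by (cases "i = 0"; cases "ts ! (i - 1)"; simp add: cbd_root cbd_cell)+

lemma length_cbd_circle:
  "j < length (cbd ts i) \<Longrightarrow> length (cbd ts i ! j) = 2 \<or> length (cbd ts i ! j) = 4"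
  by (cases "i = 0"; cases "ts ! (i - 1)") (auto simp: cbd_root cbd_cell less_Suc_eq)

lemma even_count_red_cbd:
  "j < length (cbd ts i) \<Longrightarrow> even (length (filter (\<lambda>c. c = Red) (cbd ts i ! j)))"
  by (cases "i = 0"; cases "ts ! (i - 1)") (auto simp: cbd_root cbd_cell less_Suc_eq)

lemma cbd_two_circles: "length (cbd ts i) = 2 \<Longrightarrow> i \<noteq> 0 \<and> \<not> is_disc (ts ! (i - 1))"
  by (cases "i = 0"; cases "ts ! (i - 1)") (auto simp: cbd_root cbd_cell)

text \<open>Outside the chequered quadrangle, the blue sides of every boundary circle come in
  consecutive pairs at positions 2m and 2m + 1.\<close>
definition partner :: "nat \<Rightarrow> nat" where
  "partner k = (if even k then Suc k else k - 1)"

lemma cell_bd_blue_partner: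
  assumes "t \<noteq> CheqQuad" "j < length (cell_bd t)" "k < length (cell_bd t ! j)"
    and "cell_bd t ! j ! k = Blue"
  shows "partner k < length (cell_bd t ! j) \<and> cell_bd t ! j ! partner k = Blue"
  using assms by (cases t) (auto simp: less_Suc_eq partner_def)

lemma nxt_eq: "nxt ts (i, j, k) = (i, j, (k + 1) mod length (cbd ts i ! j))"
  by (simp add: nxt_def)

lemma nxt_Suc: "k + 1 < length (cbd ts i ! j) \<Longrightarrow> nxt ts (i, j, k) = (i, j, k + 1)"
  by (simp add: nxt_eq)

lemma finite_sides: "finite (sides ts)"
proof (rule finite_subset)
  show "sides ts \<subseteq> {..length ts} \<times> {..<2} \<times> {..<4}"
    using length_cbd(2) length_cbd_circle
    by (fastforce simp: sides_def less_le_trans[of _ _ 2] intro: le_less_trans)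
qed simp

lemma nxt_in: "s \<in> sides ts \<Longrightarrow> nxt ts s \<in> sides ts"
  using length_cbd_circle[of _ ts] by (cases s) (fastforce simp: sides_iff nxt_eq)

lemma nxt_inj: "inj_on (nxt ts) (sides ts)"
proof (rule inj_onI)
  fix s t assume st: "s \<in> sides ts" "t \<in> sides ts" "nxt ts s = nxt ts t"
  obtain i j k i' j' k' where s: "s = (i, j, k)" and t: "t = (i', j', k')"
    by (cases s, cases t)
  then have eq: "i = i'" "j = j'" "(k + 1) mod length (cbd ts i ! j) = (k' + 1) mod length (cbd ts i ! j)"
    using st(3) by (auto simp: nxt_eq)
  moreover have "k < length (cbd ts i ! j)" "k' < length (cbd ts i ! j)"
    using st(1,2) s t eq by (auto simp: sides_iff)
  ultimately show "s = t"
    using s t by (auto split: if_splits simp: mod_Suc)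
qed

lemma funpow_nxt: "k < length (cbd ts i ! j) \<Longrightarrow> (nxt ts ^^ k) (i, j, 0) = (i, j, k)"
  by (induction k) (simp_all add: nxt_eq)

lemma sum_length_cell_bd:
  "(\<Sum>i<length ts. length (cell_bd (ts ! i)))
    = length (filter is_disc ts) + 2 * length (filter (\<lambda>t. \<not> is_disc t) ts)"
proof (induction ts)
  case (Cons t ts)
  have "(\<Sum>i<length (t # ts). length (cell_bd ((t # ts) ! i)))
      = length (cell_bd t) + (\<Sum>i<length ts. length (cell_bd (ts ! i)))"
    by (simp only: length_Cons sum.lessThan_Suc_shift nth_Cons_0 nth_Cons_Suc)
  with Cons show ?case
    by (cases t) simp_all
qed simp

section \<open>The red-crossing double cover of a map\<close>

definition red_side :: "cell_type list \<Rightarrow> side \<Rightarrow> bool" where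
  "red_side ts s \<longleftrightarrow> side_color ts s = Red"

definition base_edges :: "cell_type list \<Rightarrow> (side \<Rightarrow> side) \<Rightarrow> (side \<times> side) set" where
  "base_edges ts alpha = graph_on (sides ts) (nxt ts) \<union> graph_on (sides ts) alpha"

text \<open>The double cover of the glued surface (minus its vertices) that changes sheet whenever a
  red edge is crossed; a side s together with a sheet e is a point of the cover.\<close>
definition cover_edges :: "cell_type list \<Rightarrow> (side \<Rightarrow> side) \<Rightarrow> ((side \<times> bool) \<times> (side \<times> bool)) set" where
  "cover_edges ts alpha = graph_on (sides ts \<times> UNIV) (twist (nxt ts) (red_side ts))
     \<union> graph_on (sides ts \<times> UNIV) (twist alpha (red_side ts))"

lemma valid_gluingD:
  "valid_gluing ts alpha \<Longrightarrow> s \<in> sides ts \<Longrightarrow>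
    alpha s \<in> sides ts \<and> alpha (alpha s) = s \<and> alpha s \<noteq> s \<and> red_side ts (alpha s) = red_side ts s"
  unfolding valid_gluing_def red_side_def by simp

lemma path_lifting_cover_edges: "path_lifting (base_edges ts alpha) (cover_edges ts alpha)"
  unfolding base_edges_def cover_edges_def
  by (intro path_lifting_Un path_lifting_graph_on_twist)

lemma nxt_comp_glue_permutes:
  assumes "valid_gluing ts alpha"
  shows "(nxt ts \<circ> alpha) ` sides ts \<subseteq> sides ts" "inj_on (nxt ts \<circ> alpha) (sides ts)"
proof -
  have maps: "alpha ` sides ts \<subseteq> sides ts"
    using valid_gluingD[OF assms] by blast
  then show "(nxt ts \<circ> alpha) ` sides ts \<subseteq> sides ts"
    using nxt_in by (auto simp: image_subset_iff)
  have "inj_on alpha (sides ts)"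
    by (rule inj_onI) (metis valid_gluingD[OF assms])
  then show "inj_on (nxt ts \<circ> alpha) (sides ts)"
    by (rule comp_inj_on[OF _ inj_on_subset[OF nxt_inj maps]])
qed

lemma vert_rel_Image_step:
  assumes "valid_gluing ts alpha" "s \<in> sides ts"
  shows "vert_rel ts alpha `` {(nxt ts \<circ> alpha) s} = vert_rel ts alpha `` {s}"
proof -
  let ?f = "nxt ts \<circ> alpha"
  note perm = nxt_comp_glue_permutes[OF assms(1)]
  obtain p where p: "p > 0" "(?f ^^ p) s = s"
    using funpow_period[OF finite_sides perm(1,2) assms(2)] .
  have "(\<exists>n. t = (?f ^^ n) (?f s)) \<longleftrightarrow> (\<exists>n. t = (?f ^^ n) s)" for t
  proof
    assume "\<exists>n. t = (?f ^^ n) (?f s)"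
    then show "\<exists>n. t = (?f ^^ n) s"
      by (metis comp_apply funpow_Suc_right)
  next
    assume "\<exists>n. t = (?f ^^ n) s"
    then obtain n where "t = (?f ^^ n) s"
      by blast
    then have "t = (?f ^^ (n + (p - 1))) (?f s)"
      using p by (metis (no_types) Suc_pred' comp_apply funpow_Suc_right funpow_add)
    then show "\<exists>n. t = (?f ^^ n) (?f s)"
      by blast
  qed
  moreover have "?f s \<in> sides ts"
    using perm(1) assms(2) by blast
  ultimately show ?thesis
    using assms(2) unfolding vert_rel_def by auto
qed

lemma card_image_sheets_le_num_comps:
  fixes q :: "'a \<times> bool \<Rightarrow> 'b \<times> bool"
  assumes "finite D" "\<forall>(p, p')\<in>E. q p = q p'" "q ` (D \<times> UNIV) = A \<times> (UNIV :: bool set)"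
  shows "2 * card A \<le> num_comps (D \<times> UNIV) E"
proof -
  have "card (q ` (D \<times> UNIV)) = 2 * card A"
    unfolding assms(3) by (simp add: card_cartesian_product card_UNIV_bool)
  moreover have "card (q ` (D \<times> UNIV)) \<le> num_comps (D \<times> UNIV) E"
    using assms(1,2) by (intro card_image_le_num_comps) simp_all
  ultimately show ?thesis
    by simp
qed

text \<open>Every vertex of the map has two lifts, as the sheet returns to itself after going once
  around a vertex (each edge is crossed twice, the two sides having the same colour).\<close>
lemma vertices_le_num_comps_cover:
  assumes "valid_gluing ts alpha"
  shows "2 * num_vertices ts alpha \<le> num_comps (sides ts \<times> UNIV)
    (graph_on (sides ts \<times> UNIV) (twist (nxt ts) (red_side ts) \<circ> twist alpha (red_side ts)))"
  unfolding num_vertices_def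
proof (rule card_image_sheets_le_num_comps[OF finite_sides])
  let ?q = "\<lambda>p. (vert_rel ts alpha `` {fst p}, snd p)"
  show "\<forall>(p, p')\<in>graph_on (sides ts \<times> UNIV) (twist (nxt ts) (red_side ts) \<circ> twist alpha (red_side ts)).
      ?q p = ?q p'"
    using valid_gluingD[OF assms] vert_rel_Image_step[OF assms] by (auto simp: graph_on_def)
  show "?q ` (sides ts \<times> UNIV) = (sides ts // vert_rel ts alpha) \<times> UNIV"
    unfolding quotient_def by force
qed

definition red_parity :: "cell_type list \<Rightarrow> side \<Rightarrow> bool" where
  "red_parity ts s =
     odd (length (filter (\<lambda>c. c = Red) (take (snd (snd s)) (cbd ts (fst s) ! fst (snd s)))))"

lemma red_parity_nxt:
  assumes "s \<in> sides ts"
  shows "red_parity ts (nxt ts s) = (red_parity ts s \<noteq> red_side ts s)"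
proof -
  obtain i j k where s: "s = (i, j, k)"
    by (cases s)
  let ?l = "cbd ts i ! j"
  have j: "j < length (cbd ts i)" and k: "k < length ?l"
    using assms s by (auto simp: sides_iff)
  have take: "take (Suc k) ?l = take k ?l @ [?l ! k]"
    by (rule take_Suc_conv_app_nth[OF k])
  have red: "red_side ts s = (?l ! k = Red)"
    unfolding s red_side_def side_color_def by simp
  show ?thesis
  proof (cases "Suc k = length ?l")
    case True
    then have "even (length (filter (\<lambda>c. c = Red) (take k ?l @ [?l ! k])))"
      using even_count_red_cbd[OF j] take by simp
    then show ?thesis
      using True red unfolding s red_parity_def by (auto simp: nxt_eq)
  next
    case False
    then show ?thesis
      using k red take unfolding s red_parity_def by (auto simp: nxt_eq)
  qed
qed

lemma card_circles:
  "card ((\<lambda>s. (fst s, fst (snd s))) ` sides ts) = num_discs ts + 2 * length (filter (\<lambda>t. \<not> is_disc t) ts)"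
proof -
  have "(\<lambda>s. (fst s, fst (snd s))) ` sides ts = (SIGMA i:{..length ts}. {..<length (cbd ts i)})"
    using length_cbd_circle[of _ ts] by (force simp: sides_def image_iff)
  moreover have "card (SIGMA i:{..length ts}. {..<length (cbd ts i)}) = (\<Sum>i\<le>length ts. length (cbd ts i))"
    by (simp add: card_SigmaI)
  moreover have "\<dots> = 1 + (\<Sum>i<length ts. length (cell_bd (ts ! i)))"
    by (simp add: sum.atMost_shift cbd_root cbd_cell)
  ultimately show ?thesis
    unfolding num_discs_def sum_length_cell_bd by simp
qed

text \<open>Every boundary circle has two lifts, since it carries an even number of red sides.\<close>
lemma circles_le_num_comps_cover:
  "2 * (num_discs ts + 2 * length (filter (\<lambda>t. \<not> is_disc t) ts))
    \<le> num_comps (sides ts \<times> UNIV) (graph_on (sides ts \<times> UNIV) (twist (nxt ts) (red_side ts)))"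
  unfolding card_circles[symmetric]
proof (rule card_image_sheets_le_num_comps[OF finite_sides])
  let ?q = "\<lambda>p. ((fst (fst p), fst (snd (fst p))), snd p \<noteq> red_parity ts (fst p))"
  show "\<forall>(p, p')\<in>graph_on (sides ts \<times> UNIV) (twist (nxt ts) (red_side ts)). ?q p = ?q p'"
  proof
    fix pp assume "pp \<in> graph_on (sides ts \<times> UNIV) (twist (nxt ts) (red_side ts))"
    then obtain s e where s: "s \<in> sides ts" "pp = ((s, e), twist (nxt ts) (red_side ts) (s, e))"
      unfolding graph_on_def by auto
    have "fst (nxt ts s) = fst s" "fst (snd (nxt ts s)) = fst (snd s)"
      by (cases s; simp add: nxt_eq)+
    then show "case pp of (p, p') \<Rightarrow> ?q p = ?q p'"
      using red_parity_nxt[OF s(1)] s(2) by auto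
  qed
  show "?q ` (sides ts \<times> UNIV) = (\<lambda>s. (fst s, fst (snd s))) ` sides ts \<times> UNIV"
  proof (intro set_eqI iffI)
    fix z assume "z \<in> (\<lambda>s. (fst s, fst (snd s))) ` sides ts \<times> (UNIV :: bool set)"
    then obtain s b where "s \<in> sides ts" "z = ((fst s, fst (snd s)), b)"
      by auto
    then show "z \<in> ?q ` (sides ts \<times> UNIV)"
      by (intro image_eqI[of _ _ "(s, b \<noteq> red_parity ts s)"]) auto
  qed auto
qed

definition cylinder_edges :: "cell_type list \<Rightarrow> (side \<times> side) set" where
  "cylinder_edges ts = (\<lambda>i. ((Suc i, 0, 0), (Suc i, 1, 0))) ` {i. i < length ts \<and> \<not> is_disc (ts ! i)}"

lemma card_cylinder_edges: "card (cylinder_edges ts) \<le> length (filter (\<lambda>t. \<not> is_disc t) ts)"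
  unfolding cylinder_edges_def length_filter_conv_card by (rule card_image_le) simp

lemma comp_rel_circle:
  assumes "(i, j, k) \<in> sides ts"
  shows "((i, j, 0), (i, j, k)) \<in> comp_rel (graph_on (sides ts) (nxt ts))"
proof -
  have start: "(i, j, 0) \<in> sides ts" and k: "k < length (cbd ts i ! j)"
    using assms by (auto simp: sides_iff)
  have "nxt ts ` sides ts \<subseteq> sides ts"
    using nxt_in by blast
  then have "((i, j, 0), (nxt ts ^^ k) (i, j, 0)) \<in> comp_rel (graph_on (sides ts) (nxt ts))"
    using start by (rule comp_rel_funpow) simp
  then show ?thesis
    using funpow_nxt[OF k] by simp
qed

text \<open>The two boundary circles of a cylinder are not joined by the boundary walk; one extra edge
  per cylinder makes every cell connected.\<close>
lemma adj_rel_subset_comp_rel: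
  "adj_rel ts alpha \<subseteq> comp_rel (base_edges ts alpha \<union> cylinder_edges ts)"
proof
  let ?C = "comp_rel (base_edges ts alpha \<union> cylinder_edges ts)"
  have "comp_rel (graph_on (sides ts) (nxt ts)) \<subseteq> ?C"
    by (rule comp_rel_subset) (auto simp: base_edges_def)
  then have circle: "((i, j, 0), (i, j, k)) \<in> ?C" if "(i, j, k) \<in> sides ts" for i j k
    using comp_rel_circle[OF that] by (rule subsetD)
  have circles: "((i, j, 0), (i, j', 0)) \<in> ?C"
    if "j < length (cbd ts i)" "j' < length (cbd ts i)" "i \<le> length ts" for i j j'
  proof (cases "j = j'")
    case False
    then have "length (cbd ts i) = 2"
      using that length_cbd(2)[of ts i] by linarith
    then have "i \<noteq> 0" "\<not> is_disc (ts ! (i - 1))"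
      using cbd_two_circles by blast+
    then have "((i, 0, 0), (i, 1, 0)) \<in> cylinder_edges ts"
      using that(3) unfolding cylinder_edges_def by (auto intro!: image_eqI[of _ _ "i - 1"])
    then have "((i, 0, 0), (i, 1, 0)) \<in> ?C"
      by (simp add: comp_rel_edge)
    moreover from this have "((i, 1, 0), (i, 0, 0)) \<in> ?C"
      by (rule comp_rel_sym)
    moreover have "j = 0 \<and> j' = 1 \<or> j = 1 \<and> j' = 0"
      using that \<open>length (cbd ts i) = 2\<close> False by auto
    ultimately show ?thesis
      by auto
  qed simp
  fix p assume "p \<in> adj_rel ts alpha"
  then consider s where "s \<in> sides ts" "p = (s, alpha s)"
    | i j k j' k' where "(i, j, k) \<in> sides ts" "(i, j', k') \<in> sides ts" "p = ((i, j, k), (i, j', k'))"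
    unfolding adj_rel_def by force
  then show "p \<in> ?C"
  proof cases
    case 1
    then show ?thesis
      unfolding base_edges_def by (auto intro: comp_rel_edge graph_onI)
  next
    case 2
    have "((i, j, 0), (i, j', 0)) \<in> ?C"
      using 2(1,2) by (intro circles) (simp_all add: sides_iff)
    then show ?thesis
      unfolding 2(3)
      by (rule comp_rel_trans[OF comp_rel_trans[OF comp_rel_sym[OF circle[OF 2(1)]]] circle[OF 2(2)]])
  qed
qed

lemma num_comps_base_edges_le:
  assumes "connected_map ts alpha"
  shows "num_comps (sides ts) (base_edges ts alpha) \<le> 1 + length (filter (\<lambda>t. \<not> is_disc t) ts)"
proof -
  have "(i, 0, 0) \<in> sides ts" if "i \<le> length ts" for i
    using that length_cbd(1)[of ts i] length_cbd_circle[of 0 ts i] by (auto simp: sides_iff)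
  then have "\<forall>p\<in>cylinder_edges ts. fst p \<in> sides ts"
    unfolding cylinder_edges_def by auto
  then have "num_comps (sides ts) (base_edges ts alpha)
      \<le> num_comps (sides ts) (base_edges ts alpha \<union> cylinder_edges ts) + card (cylinder_edges ts)"
    by (intro num_comps_le_union finite_sides) (simp_all add: cylinder_edges_def)
  also have "num_comps (sides ts) (base_edges ts alpha \<union> cylinder_edges ts)
      \<le> num_comps (sides ts) (adj_rel ts alpha)"
    by (intro num_comps_mono finite_sides comp_rel_mono adj_rel_subset_comp_rel)
  also have "num_comps (sides ts) (adj_rel ts alpha) \<le> 1"
    using assms unfolding connected_map_def by (intro num_comps_le_one finite_sides)
  finally show ?thesis
    using card_cylinder_edges[of ts] by linarith
qed

text \<open>The cover has at least twice as many vertices and boundary circles as the map and exactly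
  twice as many edges, so the Euler inequality gives 2 (V + F - E) \<le> 2 K' for its number K' of
  components. Here V + F - E = 2 + 2c for a sphere with c cylinders, and the base has
  K \<le> 1 + c components; a connected fibre would force K' \<le> 2K - 1, which is too small.\<close>
lemma cover_fibres_disconnected:
  assumes "UM0_ABAB ts alpha" "x \<in> sides ts"
  shows "((x, False), (x, True)) \<notin> comp_rel (cover_edges ts alpha)"
proof
  let ?D = "sides ts \<times> (UNIV :: bool set)"
  let ?nxt = "twist (nxt ts) (red_side ts)" and ?glue = "twist alpha (red_side ts)"
  assume "((x, False), (x, True)) \<in> comp_rel (cover_edges ts alpha)"
  then have merge: "num_comps ?D (cover_edges ts alpha) + 1 \<le> 2 * num_comps (sides ts) (base_edges ts alpha)"
    by (rule num_comps_double_cover_connected_fibre[OF finite_sides path_lifting_cover_edges assms(2)])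
  have map: "valid_gluing ts alpha" "connected_map ts alpha" "euler_char ts alpha = 2"
    using assms(1) unfolding UM0_ABAB_def by auto
  have "2 * (num_comps ?D (graph_on ?D (?nxt \<circ> ?glue)) + num_comps ?D (graph_on ?D ?nxt))
      \<le> card ?D + 4 * num_comps ?D (cover_edges ts alpha)"
    unfolding cover_edges_def
  proof (rule euler_ineq)
    show "finite ?D" "?nxt ` ?D \<subseteq> ?D" "inj_on ?nxt ?D"
      using finite_sides nxt_in nxt_inj by (auto intro: twist_maps_to inj_on_twist)
    show "\<forall>p\<in>?D. ?glue p \<in> ?D \<and> ?glue (?glue p) = p \<and> ?glue p \<noteq> p"
      using valid_gluingD[OF map(1)] by (intro twist_involution) blast
  qed
  moreover obtain m where "card (sides ts) = 2 * m"
    using even_card_involution[OF finite_sides] valid_gluingD[OF map(1)] by (meson evenE)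
  moreover have "card ?D = 2 * card (sides ts)"
    by (simp add: card_cartesian_product card_UNIV_bool)
  ultimately show False
    using map(3) merge vertices_le_num_comps_cover[OF map(1)] circles_le_num_comps_cover[of ts]
      num_comps_base_edges_le[OF map(2)]
    unfolding euler_char_def num_edges_def distrib_left by linarith
qed

lemma sheet_function:
  assumes "UM0_ABAB ts alpha"
  obtains g where "\<And>s. s \<in> sides ts \<Longrightarrow> g (nxt ts s) = (g s \<noteq> red_side ts s)"
    "\<And>s. s \<in> sides ts \<Longrightarrow> g (alpha s) = (g s \<noteq> red_side ts s)"
proof -
  have glue: "valid_gluing ts alpha"
    using assms unfolding UM0_ABAB_def by blast
  obtain g where g: "\<And>s t e e'. s \<in> sides ts \<Longrightarrow> t \<in> sides ts \<Longrightarrow>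
      (s, t) \<in> comp_rel (base_edges ts alpha) \<Longrightarrow>
      ((s, e), (t, e')) \<in> comp_rel (cover_edges ts alpha) \<Longrightarrow> (e \<noteq> g s) = (e' \<noteq> g t)"
    using double_cover_trivial[OF path_lifting_cover_edges cover_fibres_disconnected[OF assms]]
    by blast
  have step: "g (f s) = (g s \<noteq> red_side ts s)"
    if "s \<in> sides ts" "f s \<in> sides ts" "f = nxt ts \<or> f = alpha" for f s
  proof -
    have "(s, f s) \<in> base_edges ts alpha"
      using that unfolding base_edges_def by (auto intro: graph_onI)
    moreover have "((s, False), (f s, red_side ts s)) \<in> cover_edges ts alpha"
      using graph_onI[of "(s, False)" "sides ts \<times> UNIV" "twist f (red_side ts)"] that
      unfolding cover_edges_def by auto
    ultimately have "(False \<noteq> g s) = (red_side ts s \<noteq> g (f s))"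
      using that(1,2) by (intro g) (simp_all add: comp_rel_edge)
    then show ?thesis
      by auto
  qed
  show ?thesis
  proof (rule that)
    fix s assume "s \<in> sides ts"
    then show "g (nxt ts s) = (g s \<noteq> red_side ts s)" "g (alpha s) = (g s \<noteq> red_side ts s)"
      using step[of s "nxt ts"] step[of s alpha] nxt_in[of s ts] valid_gluingD[OF glue] by simp_all
  qed
qed

section \<open>Blue sides on one sheet\<close>

lemma even_card_blue_sheet_sides:
  assumes "valid_gluing ts alpha" "\<And>s. s \<in> sides ts \<Longrightarrow> g (alpha s) = (g s \<noteq> red_side ts s)"
  shows "even (card {s \<in> sides ts. \<not> red_side ts s \<and> g s})"
  using finite_sides
proof (rule even_card_involution[where f = alpha, OF finite_subset[rotated]])
  show "\<forall>x\<in>{s \<in> sides ts. \<not> red_side ts s \<and> g s}. alpha x \<in> {s \<in> sides ts. \<not> red_side ts s \<and> g s}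
      \<and> alpha (alpha x) = x \<and> alpha x \<noteq> x"
    using valid_gluingD[OF assms(1)] assms(2) by auto
qed auto

text \<open>Inside a cell other than the chequered quadrangle, the sheet is constant along each pair
  of adjacent blue sides, so the blue sides on a given sheet pair off.\<close>
lemma even_card_blue_sheet_cell_sides:
  assumes "CheqQuad \<notin> set ts" "\<And>s. s \<in> sides ts \<Longrightarrow> g (nxt ts s) = (g s \<noteq> red_side ts s)"
  shows "even (card {s \<in> sides ts. fst s \<noteq> 0 \<and> \<not> red_side ts s \<and> g s})"
proof (rule even_card_involution)
  let ?B = "{s \<in> sides ts. fst s \<noteq> 0 \<and> \<not> red_side ts s \<and> g s}"
  let ?psi = "\<lambda>(i, j, k). (i, j, partner k) :: side"
  show "finite ?B"
    using finite_sides by simp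
  show "\<forall>s\<in>?B. ?psi s \<in> ?B \<and> ?psi (?psi s) = s \<and> ?psi s \<noteq> s"
  proof
    fix s assume "s \<in> ?B"
    moreover obtain i j k where ijk: "s = (i, j, k)"
      by (cases s)
    ultimately have s: "(i, j, k) \<in> sides ts" "i \<noteq> 0" "\<not> red_side ts (i, j, k)" "g (i, j, k)"
      by auto
    have "i - 1 < length ts"
      using s(1,2) by (auto simp: sides_iff)
    then have cell: "cbd ts i = cell_bd (ts ! (i - 1))" "ts ! (i - 1) \<noteq> CheqQuad"
      using assms(1) cbd_cell[OF s(2)] nth_mem by fastforce+
    have "cbd ts i ! j ! k = Blue"
      using s(3) unfolding red_side_def side_color_def by (cases "cbd ts i ! j ! k") auto
    moreover have "j < length (cell_bd (ts ! (i - 1)))" "k < length (cell_bd (ts ! (i - 1)) ! j)"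
      using s(1) cell(1) by (simp_all add: sides_iff)
    ultimately have p: "partner k < length (cbd ts i ! j)" "cbd ts i ! j ! partner k = Blue"
      using cell_bd_blue_partner[OF cell(2)] unfolding cell(1) by blast+
    have p_side: "(i, j, partner k) \<in> sides ts" "\<not> red_side ts (i, j, partner k)"
      using s(1) p by (auto simp: sides_iff red_side_def side_color_def)
    have "g (i, j, partner k) = g (i, j, k)"
    proof (cases "even k")
      case True
      then show ?thesis
        using assms(2)[OF s(1)] s(3) p(1) by (simp add: partner_def nxt_Suc)
    next
      case False
      then have "nxt ts (i, j, partner k) = (i, j, k)"
        using s(1) by (auto simp: partner_def nxt_eq sides_iff)
      then show ?thesis
        using assms(2)[OF p_side(1)] p_side(2) by simp
    qed
    moreover have "partner (partner k) = k" "partner k \<noteq> k"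
      using odd_pos[of k] by (auto simp: partner_def even_diff_nat)
    ultimately show "?psi s \<in> ?B \<and> ?psi (?psi s) = s \<and> ?psi s \<noteq> s"
      using s p_side unfolding ijk by simp
  qed
qed

text \<open>On the root face RBRB the red side between the two blue sides puts them on opposite
  sheets.\<close>
lemma card_blue_sheet_root_sides:
  assumes "\<And>s. s \<in> sides ts \<Longrightarrow> g (nxt ts s) = (g s \<noteq> red_side ts s)"
  shows "card {s \<in> sides ts. fst s = 0 \<and> \<not> red_side ts s \<and> g s} = 1"
proof -
  have "(0, 0, 1) \<in> sides ts" "(0, 0, 2) \<in> sides ts"
    by (simp_all add: sides_iff cbd_root)
  moreover have "\<not> red_side ts (0, 0, 1)" "red_side ts (0, 0, 2)"
    by (simp_all add: red_side_def side_color_def cbd_root)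
  moreover have "nxt ts (0, 0, 1) = (0, 0, 2)" "nxt ts (0, 0, 2) = (0, 0, 3)"
    by (simp_all add: nxt_eq cbd_root)
  ultimately have "g (0, 0, 3) = (\<not> g (0, 0, 1))"
    using assms[of "(0, 0, 1)"] assms[of "(0, 0, 2)"] by simp
  moreover have "{s \<in> sides ts. fst s = 0 \<and> \<not> red_side ts s \<and> g s}
      = {s \<in> {(0, 0, 1), (0, 0, 3)}. g s}"
  proof (rule set_eqI)
    fix s :: side
    obtain i j k where s: "s = (i, j, k)"
      by (cases s)
    have "k < 4 \<longleftrightarrow> k = 0 \<or> k = 1 \<or> k = 2 \<or> k = 3"
      by arith
    then have "(i, j, k) \<in> sides ts \<and> i = 0 \<and> \<not> red_side ts (i, j, k)
        \<longleftrightarrow> (i, j, k) = (0, 0, 1) \<or> (i, j, k) = (0, 0, 3)"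
      by (auto simp: sides_iff cbd_root red_side_def side_color_def)
    then show "s \<in> {s \<in> sides ts. fst s = 0 \<and> \<not> red_side ts s \<and> g s} \<longleftrightarrow> s \<in> {s \<in> {(0, 0, 1), (0, 0, 3)}. g s}"
      unfolding s by auto
  qed
  moreover have "{s \<in> {(0, 0, 1), (0, 0, 3)}. g s} = (if g (0, 0, 1) then {(0, 0, 1)} else {(0, 0, 3)})"
    using calculation(1) by auto
  ultimately show ?thesis
    by simp
qed

lemma card_blue_sheet_sides:
  assumes "\<And>s. s \<in> sides ts \<Longrightarrow> g (nxt ts s) = (g s \<noteq> red_side ts s)"
  shows "card {s \<in> sides ts. \<not> red_side ts s \<and> g s}
    = card {s \<in> sides ts. fst s \<noteq> 0 \<and> \<not> red_side ts s \<and> g s} + 1"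
proof -
  let ?B = "\<lambda>P. {s \<in> sides ts. P (fst s) \<and> \<not> red_side ts s \<and> g s}"
  have "finite (?B (\<lambda>i. i \<noteq> 0))" "finite (?B (\<lambda>i. i = 0))"
    using finite_sides by simp_all
  moreover have "?B (\<lambda>i. i \<noteq> 0) \<inter> ?B (\<lambda>i. i = 0) = {}"
    by auto
  ultimately have "card (?B (\<lambda>i. i \<noteq> 0) \<union> ?B (\<lambda>i. i = 0))
      = card (?B (\<lambda>i. i \<noteq> 0)) + card (?B (\<lambda>i. i = 0))"
    by (rule card_Un_disjoint)
  moreover have "?B (\<lambda>i. i \<noteq> 0) \<union> ?B (\<lambda>i. i = 0) = {s \<in> sides ts. \<not> red_side ts s \<and> g s}"
    by auto
  ultimately show ?thesis
    using card_blue_sheet_root_sides[OF assms] by simp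
qed

theorem lemma1:
  fixes ts :: "cell_type list" and alpha :: "side \<Rightarrow> side"
  assumes "UM0_ABAB ts alpha"
  shows "CheqQuad \<in> set ts \<or> OppCyl \<in> set ts"
proof -
  obtain g where nxt: "\<And>s. s \<in> sides ts \<Longrightarrow> g (nxt ts s) = (g s \<noteq> red_side ts s)"
    and glue: "\<And>s. s \<in> sides ts \<Longrightarrow> g (alpha s) = (g s \<noteq> red_side ts s)"
    using sheet_function[OF assms] by blast
  have "even (card {s \<in> sides ts. \<not> red_side ts s \<and> g s})"
    using assms unfolding UM0_ABAB_def by (intro even_card_blue_sheet_sides[OF _ glue]) simp
  then have "odd (card {s \<in> sides ts. fst s \<noteq> 0 \<and> \<not> red_side ts s \<and> g s})"
    by (simp add: card_blue_sheet_sides[OF nxt])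
  then have "CheqQuad \<in> set ts"
    using even_card_blue_sheet_cell_sides[OF _ nxt] by blast
  then show ?thesis ..
qed

end
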